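(* Let $0<\beta<\zeta$ (so that $\xi_2(\beta)<\xi_1(\beta)$). For $C\in(\xi_2(\beta),\xi_1(\beta))$ let $z_f^C\in(0,d)$ be the unique point such that $F_{z_f^C}\mathbf 1_{[0,z_f^C]}+G_{C,z_f^C}\mathbf 1_{(z_f^C,d]}$ solves Problem 1 with derivative $0$ at $0$ and value $C$ at $d$, and let $z_g^C\in(d,\infty)$ be the unique point such that $H_{C,z_g^C}\mathbf 1_{[d,z_g^C]}+K_{z_g^C}\mathbf 1_{(z_g^C,\infty)}$ is bounded and solves Problem 2 with value $C$ at $d$. (i) The map $(\xi_2(\beta),\xi_1(\beta))\to\mathbb R$, $C\mapsto G_{C,z_f^C}'(d)$ is strictly increasing, and $G_{\xi_1(\beta),d}'(d)=-\beta$. (ii) The map $(\xi_2(\beta),\xi_1(\beta))\to\mathbb R$, $C\mapsto H_{C,z_g^C}'(d)$ is strictly decreasing, and $H_{\xi_2(\beta),d}'(d)=-\beta$.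
   Context: Fix $\mu\in\mathbb R$, $\sigma>0$, $u_0>0$, $r>0$, $\beta>0$, $d>0$. For $u\in[0,u_0]$ let $\theta_1(u)=\frac{\sqrt{(\mu-u)^2+2r\sigma^2}+(\mu-u)}{\sigma^2}$, $\theta_2(u)=\frac{\sqrt{(\mu-u)^2+2r\sigma^2}-(\mu-u)}{\sigma^2}$; write $\alpha_i=\theta_i(u_0)$, $\gamma_i=\theta_i(0)$. Define $\zeta=\frac{\alpha_1\alpha_2(e^{\alpha_1d}-e^{-\alpha_2d})}{r(\alpha_1+\alpha_2)e^{\alpha_1d}}$, $\xi_1(\beta)=\frac{\beta u_0}{r}-\beta\frac{e^{\alpha_1d}+\frac{\alpha_1}{\alpha_2}e^{-\alpha_2d}}{\alpha_1(e^{\alpha_1d}-e^{-\alpha_2d})}$, $\xi_2(\beta)=\frac{\beta u_0-1}{r}+\frac{\beta}{\alpha_2}$. For $s\in(0,d]$, $t\ge d$, real $C$: $F_s(z)=\frac{\beta u_0}{r}-\beta\frac{e^{\alpha_1z}+\frac{\alpha_1}{\alpha_2}e^{-\alpha_2z}}{\alpha_1(e^{\alpha_1s}-e^{-\alpha_2s})}$; $G_{C,s}(z)=\frac{C\gamma_2e^{-\gamma_2(s-d)}-\beta}{\gamma_1e^{\gamma_1s}+\gamma_2e^{(\gamma_1+\gamma_2)d}e^{-\gamma_2s}}(e^{\gamma_1z}-e^{(\gamma_1+\gamma_2)d}e^{-\gamma_2z})+Ce^{-\gamma_2(z-d)}$; $H_{C,t}(z)=-\frac1r+\frac{C+\frac1r-\frac{\beta}{\gamma_2}e^{-\gamma_2(d-t)}}{e^{\gamma_1d}+\frac{\gamma_1}{\gamma_2}e^{(\gamma_1+\gamma_2)t}e^{-\gamma_2d}}(e^{\gamma_1z}+\frac{\gamma_1}{\gamma_2}e^{(\gamma_1+\gamma_2)t}e^{-\gamma_2z})+\frac{\beta}{\gamma_2}e^{-\gamma_2(z-t)}$;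 $K_t(z)=\frac{\beta u_0-1}{r}+\frac{\beta}{\alpha_2}e^{-\alpha_2(z-t)}$. Problem 1: a bounded $C^2$ function $f$ on $[0,d]$ with $-rf-\mu f'+\frac{\sigma^2}{2}f''+\sup_{u\in[0,u_0]}\{(\beta+f')u\}=0$ on $[0,d]$. Problem 2: a bounded $C^2$ function $g$ on $[d,\infty)$ with $-rg-\mu g'+\frac{\sigma^2}{2}g''+\sup_{u\in[0,u_0]}\{(\beta+g')u\}=1$ on $[d,\infty)$. (The existence and uniqueness of $z_f^C,z_g^C$ for $C$ in the stated interval is established in the paper.) *)

theory Defs
  imports "HOL-Analysis.Analysis"
begin

definition theta1 :: "real \<Rightarrow> real \<Rightarrow> real \<Rightarrow> real \<Rightarrow> real" where
  "theta1 mu sg r u = (sqrt ((mu - u)^2 + 2*r* sg^2) + (mu - u)) / sg^2"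

definition theta2 :: "real \<Rightarrow> real \<Rightarrow> real \<Rightarrow> real \<Rightarrow> real" where
  "theta2 mu sg r u = (sqrt ((mu - u)^2 + 2*r* sg^2) - (mu - u)) / sg^2"

definition zeta :: "real \<Rightarrow> real \<Rightarrow> real \<Rightarrow> real \<Rightarrow> real \<Rightarrow> real" where
  "zeta mu sg u0 r d =
     (let a1 = theta1 mu sg r u0; a2 = theta2 mu sg r u0 in
      a1 * a2 * (exp (a1*d) - exp (-a2*d)) / (r * (a1 + a2) * exp (a1*d)))"

definition xi1 :: "real \<Rightarrow> real \<Rightarrow> real \<Rightarrow> real \<Rightarrow> real \<Rightarrow> real \<Rightarrow> real" where
  "xi1 mu sg u0 r d beta =
     (let a1 = theta1 mu sg r u0; a2 = theta2 mu sg r u0 in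
      beta*u0/r - beta * (exp (a1*d) + a1/a2 * exp (-a2*d)) / (a1 * (exp (a1*d) - exp (-a2*d))))"

definition xi2 :: "real \<Rightarrow> real \<Rightarrow> real \<Rightarrow> real \<Rightarrow> real \<Rightarrow> real" where
  "xi2 mu sg u0 r beta = (beta*u0 - 1)/r + beta / theta2 mu sg r u0"

definition Ff :: "real \<Rightarrow> real \<Rightarrow> real \<Rightarrow> real \<Rightarrow> real \<Rightarrow> real \<Rightarrow> real \<Rightarrow> real" where
  "Ff mu sg u0 r beta s z =
     (let a1 = theta1 mu sg r u0; a2 = theta2 mu sg r u0 in
      beta*u0/r - beta * (exp (a1*z) + a1/a2 * exp (-a2*z)) / (a1 * (exp (a1* s) - exp (-a2* s))))"

definition Gf :: "real \<Rightarrow> real \<Rightarrow> real \<Rightarrow> real \<Rightarrow> real \<Rightarrow> real \<Rightarrow> real \<Rightarrow> real \<Rightarrow> real" where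
  "Gf mu sg r beta d C s z =
     (let g1 = theta1 mu sg r 0; g2 = theta2 mu sg r 0 in
      (C * g2 * exp (-g2*(s - d)) - beta)
        / (g1 * exp (g1* s) + g2 * exp ((g1 + g2)*d) * exp (-g2* s))
        * (exp (g1*z) - exp ((g1 + g2)*d) * exp (-g2*z))
      + C * exp (-g2*(z - d)))"

definition Hf :: "real \<Rightarrow> real \<Rightarrow> real \<Rightarrow> real \<Rightarrow> real \<Rightarrow> real \<Rightarrow> real \<Rightarrow> real \<Rightarrow> real" where
  "Hf mu sg r beta d C t z =
     (let g1 = theta1 mu sg r 0; g2 = theta2 mu sg r 0 in
      - 1/r
      + (C + 1/r - beta/g2 * exp (-g2*(d - t)))
        / (exp (g1*d) + g1/g2 * exp ((g1 + g2)*t) * exp (-g2*d))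
        * (exp (g1*z) + g1/g2 * exp ((g1 + g2)*t) * exp (-g2*z))
      + beta/g2 * exp (-g2*(z - t)))"

definition Kf :: "real \<Rightarrow> real \<Rightarrow> real \<Rightarrow> real \<Rightarrow> real \<Rightarrow> real \<Rightarrow> real \<Rightarrow> real" where
  "Kf mu sg u0 r beta t z =
     (let a2 = theta2 mu sg r u0 in (beta*u0 - 1)/r + beta/a2 * exp (-a2*(z - t)))"

definition solves_HJB ::
  "real \<Rightarrow> real \<Rightarrow> real \<Rightarrow> real \<Rightarrow> real \<Rightarrow> real set \<Rightarrow> real \<Rightarrow> (real \<Rightarrow> real) \<Rightarrow> bool" where
  "solves_HJB mu sg u0 r beta S rhs f \<longleftrightarrow>
     (\<exists>f1 f2.
        (\<forall>x\<in>S. (f has_real_derivative f1 x) (at x within S)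
               \<and> (f1 has_real_derivative f2 x) (at x within S))
      \<and> continuous_on S f2
      \<and> bounded (f ` S)
      \<and> (\<forall>x\<in>S. - r * f x - mu * f1 x + sg^2/2 * f2 x
                  + (SUP u\<in>{0..u0}. (beta + f1 x) * u) = rhs))"

definition solves_P1 where
  "solves_P1 mu sg u0 r beta d f = solves_HJB mu sg u0 r beta {0..d} 0 f"

definition solves_P2 where
  "solves_P2 mu sg u0 r beta d g = solves_HJB mu sg u0 r beta {d..} 1 g"

definition is_zf :: "real \<Rightarrow> real \<Rightarrow> real \<Rightarrow> real \<Rightarrow> real \<Rightarrow> real \<Rightarrow> real \<Rightarrow> real \<Rightarrow> bool" where
  "is_zf mu sg u0 r beta d C s \<longleftrightarrow>
     (let f = (\<lambda>z. if z \<le> s then Ff mu sg u0 r beta s z else Gf mu sg r beta d C s z) in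
       solves_P1 mu sg u0 r beta d f
     \<and> (f has_real_derivative 0) (at 0 within {0..d})
     \<and> f d = C)"

definition is_zg :: "real \<Rightarrow> real \<Rightarrow> real \<Rightarrow> real \<Rightarrow> real \<Rightarrow> real \<Rightarrow> real \<Rightarrow> real \<Rightarrow> bool" where
  "is_zg mu sg u0 r beta d C t \<longleftrightarrow>
     (let g = (\<lambda>z. if z \<le> t then Hf mu sg r beta d C t z else Kf mu sg u0 r beta t z) in
       solves_P2 mu sg u0 r beta d g
     \<and> g d = C)"

end

theory Submission
  imports Defs
begin

text \<open>Let \<open>f\<^sub>1, f\<^sub>2\<close> be two solutions of the same HJB equation and \<open>w = f\<^sub>2 - f\<^sub>1\<close>.
  The Hamiltonian \<open>p \<mapsto> max 0 ((\<beta> + p) u\<^sub>0)\<close> is nondecreasing and \<open>u\<^sub>0\<close>-Lipschitz, so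
  wherever \<open>w' \<ge> 0\<close> the difference satisfies the linear inequality \<open>w'' + k w' \<ge> \<rho> w\<close>
  with \<open>k = 2(|\<mu>| + u\<^sub>0)/\<sigma>\<^sup>2\<close>, \<open>\<rho> = 2r/\<sigma>\<^sup>2\<close>; in particular a critical point with
  \<open>w > 0\<close> is a strict local minimum.

  On \<open>[0,d]\<close>, with \<open>w'(0) = 0\<close> and \<open>w(d) = C\<^sub>2 - C\<^sub>1 > 0\<close>, the positive maximum of
  \<open>w\<close> can therefore only sit at \<open>d\<close> with \<open>w'(d) > 0\<close>. On \<open>[d,\<infinity>)\<close>, if \<open>w'(d) \<ge> 0\<close> then
  \<open>w'\<close> becomes and stays positive, so \<open>w\<close> is bounded below by a positive constant and
  \<open>w'' + k w' \<ge> c > 0\<close> makes \<open>w'\<close> grow linearly, contradicting boundedness; hence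
  \<open>w'(d) < 0\<close>. Since the piecewise solutions coincide with \<open>G\<close> and \<open>H\<close> near \<open>d\<close>,
  the slopes compared in the theorem are the slopes of the solutions themselves; the values
  \<open>-\<beta>\<close> at \<open>s = t = d\<close> are direct computations. The monotonicity holds for all
  \<open>C\<^sub>1 < C\<^sub>2\<close> admitting the points \<open>z\<^sub>f, z\<^sub>g\<close>.\<close>

section \<open>Calculus on intervals\<close>

lemma DERIV_within_imp_DERIV:
  assumes "(f has_real_derivative D) (at x within S)" "{a..b} \<subseteq> S" "a < x" "x < b"
  shows "DERIV f x :> D"
proof -
  have "x \<in> interior {a..b}"
    using assms(3,4) by simp
  then have "at x within S = at x"
    using interior_mono[OF assms(2)] at_within_interior by blast
  with assms(1) show ?thesis
    by simp
qed

lemma deriv_eq_if_eq_near_within: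
  fixes f g :: "real \<Rightarrow> real"
  assumes f: "(f has_real_derivative D) (at x within S)" and g: "g field_differentiable at x"
    and "at x within S \<noteq> bot" "x \<in> S" "\<delta> > 0"
    and eq: "\<And>y. y \<in> S \<Longrightarrow> dist y x < \<delta> \<Longrightarrow> g y = f y"
  shows "deriv g x = D"
proof -
  have "(g has_real_derivative deriv g x) (at x within S)"
    using g DERIV_deriv_iff_field_differentiable has_field_derivative_at_within by blast
  then have "(f has_real_derivative deriv g x) (at x within S)"
    using has_field_derivative_transform_within[OF _ \<open>\<delta> > 0\<close> \<open>x \<in> S\<close>] eq by blast
  then show ?thesis
    using has_field_derivative_unique[OF _ f \<open>at x within S \<noteq> bot\<close>] by blast
qed

lemma DERIV_within_pos_imp_less:
  fixes w w' :: "real \<Rightarrow> real"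
  assumes der: "\<And>x. x \<in> S \<Longrightarrow> (w has_real_derivative w' x) (at x within S)"
    and sub: "{a..b} \<subseteq> S" and "a < b"
    and pos: "\<And>x. a < x \<Longrightarrow> x < b \<Longrightarrow> w' x > 0"
  shows "w a < w b"
proof (rule DERIV_pos_imp_increasing_open[OF \<open>a < b\<close>])
  show "continuous_on {a..b} w"
    using continuous_on_subset[OF DERIV_continuous_on[OF der] sub] .
  fix x assume x: "a < x" "x < b"
  then have "x \<in> S"
    using sub by auto
  with x show "\<exists>y. DERIV w x :> y \<and> y > 0"
    using DERIV_within_imp_DERIV[OF der sub] pos by blast
qed

lemma DERIV_within_neg_imp_greater:
  fixes w w' :: "real \<Rightarrow> real"
  assumes der: "\<And>x. x \<in> S \<Longrightarrow> (w has_real_derivative w' x) (at x within S)"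
    and sub: "{a..b} \<subseteq> S" and "a < b"
    and neg: "\<And>x. a < x \<Longrightarrow> x < b \<Longrightarrow> w' x < 0"
  shows "w a > w b"
proof -
  have "- w a < - w b"
    by (rule DERIV_within_pos_imp_less[OF DERIV_minus[OF der] sub \<open>a < b\<close>]) (use neg in auto)
  then show ?thesis
    by simp
qed

lemma DERIV_within_nonneg_imp_le:
  fixes w w' :: "real \<Rightarrow> real"
  assumes der: "\<And>x. x \<in> S \<Longrightarrow> (w has_real_derivative w' x) (at x within S)"
    and sub: "{a..b} \<subseteq> S" and "a \<le> b"
    and nonneg: "\<And>x. a < x \<Longrightarrow> x < b \<Longrightarrow> w' x \<ge> 0"
  shows "w a \<le> w b"
proof (rule DERIV_nonneg_imp_increasing_open[OF \<open>a \<le> b\<close>])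
  show "continuous_on {a..b} w"
    using continuous_on_subset[OF DERIV_continuous_on[OF der] sub] .
  fix x assume x: "a < x" "x < b"
  then have "x \<in> S"
    using sub by auto
  with x show "\<exists>y. DERIV w x :> y \<and> y \<ge> 0"
    using DERIV_within_imp_DERIV[OF der sub] nonneg by blast
qed

lemma deriv_nonneg_at_right_end_max:
  fixes w :: "real \<Rightarrow> real"
  assumes der: "(w has_real_derivative D) (at b within {a..b})" and "a < b"
    and max: "\<And>y. y \<in> {a..b} \<Longrightarrow> w y \<le> w b"
  shows "D \<ge> 0"
proof (rule ccontr)
  assume "\<not> D \<ge> 0"
  then have "D < 0"
    by simp
  then obtain \<delta> where "\<delta> > 0" and dec: "\<forall>h>0. b - h \<in> {a..b} \<longrightarrow> h < \<delta> \<longrightarrow> w b < w (b - h)"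
    using has_real_derivative_neg_dec_left[OF der \<open>D < 0\<close>] by blast
  define h where "h = min \<delta> (b - a) / 2"
  have h: "h > 0" "b - h \<in> {a..b}" "h < \<delta>"
    using \<open>\<delta> > 0\<close> \<open>a < b\<close> by (auto simp: h_def min_def field_simps)
  then have "w b < w (b - h)"
    using dec by blast
  then show False
    using max[OF h(2)] by simp
qed

lemma deriv_zero_at_max_Icc:
  fixes w w' :: "real \<Rightarrow> real"
  assumes der: "\<And>t. t \<in> {a..b} \<Longrightarrow> (w has_real_derivative w' t) (at t within {a..b})"
    and x: "x \<in> {a..b}" and max: "\<And>y. y \<in> {a..b} \<Longrightarrow> w y \<le> w x"
    and "a < b" "w' a = 0" "w' b \<le> 0"
  shows "w' x = 0"
proof -
  consider "x = a" | "a < x" "x < b" | "x = b"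
    using x by fastforce
  then show ?thesis
  proof cases
    case 2
    show ?thesis
    proof (rule DERIV_local_max)
      show "DERIV w x :> w' x"
        using DERIV_within_imp_DERIV[OF der[OF x] order_refl] 2 by blast
      show "0 < min (x - a) (b - x)"
        using 2 by simp
      show "\<forall>y. \<bar>x - y\<bar> < min (x - a) (b - x) \<longrightarrow> w y \<le> w x"
        by (auto intro!: max simp: abs_less_iff)
    qed
  next
    case 3
    then have "w' b \<ge> 0"
      using deriv_nonneg_at_right_end_max[OF der \<open>a < b\<close>] max \<open>a < b\<close> by simp
    with 3 \<open>w' b \<le> 0\<close> show ?thesis
      by simp
  qed (use \<open>w' a = 0\<close> in simp)
qed

lemma continuous_on_first_zero:
  fixes g :: "real \<Rightarrow> real"
  assumes cont: "continuous_on {a..b} g" and "g a > 0" "g b \<le> 0" "a \<le> b"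
  obtains z where "a < z" "z \<le> b" "g z = 0" "\<And>t. a \<le> t \<Longrightarrow> t < z \<Longrightarrow> g t > 0"
proof -
  define Z where "Z = {t \<in> {a..b}. g t = 0}"
  have zero_in_Z: "\<exists>z\<in>Z. z \<le> t" if t: "a \<le> t" "t \<le> b" "g t \<le> 0" for t
  proof -
    have "continuous_on {a..t} g"
      using continuous_on_subset[OF cont] t by auto
    then obtain z where "a \<le> z" "z \<le> t" "g z = 0"
      using IVT2'[of g t 0 a] t \<open>g a > 0\<close> by auto
    then show ?thesis
      using t by (auto simp: Z_def)
  qed
  have "closed Z"
    unfolding Z_def by (rule continuous_closed_preimage_constant[OF cont closed_atLeastAtMost])
  moreover have "Z \<noteq> {}"
    using zero_in_Z[of b] assms(3,4) by auto
  moreover have "bdd_below Z"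
    by (auto simp: Z_def bdd_below_def)
  ultimately have "Inf Z \<in> Z"
    using closed_contains_Inf by blast
  then have z: "a \<le> Inf Z" "Inf Z \<le> b" "g (Inf Z) = 0"
    by (auto simp: Z_def)
  have before: "g t > 0" if t: "a \<le> t" "t < Inf Z" for t
  proof (rule ccontr)
    assume "\<not> g t > 0"
    then obtain z' where "z' \<in> Z" "z' < Inf Z"
      using zero_in_Z[of t] t z by force
    then show False
      using cInf_lower[OF _ \<open>bdd_below Z\<close>] by fastforce
  qed
  have "a \<noteq> Inf Z"
    using z(3) \<open>g a > 0\<close> by auto
  with z have "a < Inf Z"
    by simp
  with z before show thesis
    using that by blast
qed

section \<open>Comparison principles for second-order differential inequalities\<close>

lemma critical_point_increase_right:
  fixes w w' :: "real \<Rightarrow> real"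
  assumes der: "\<And>t. t \<in> S \<Longrightarrow> (w has_real_derivative w' t) (at t within S)"
    and der2: "(w' has_real_derivative c) (at x within S)" "c > 0"
    and crit: "w' x = 0"
    and sub: "{x..y} \<subseteq> S" and "x < y"
  obtains z where "x < z" "z \<le> y" "w x < w z" "w' z > 0"
proof -
  obtain \<delta> where "\<delta> > 0" and inc: "\<forall>h>0. x + h \<in> S \<longrightarrow> h < \<delta> \<longrightarrow> w' x < w' (x + h)"
    using has_real_derivative_pos_inc_right[OF der2] by blast
  define z where "z = x + min \<delta> (y - x) / 2"
  have z: "x < z" "z \<le> y" "z - x < \<delta>"
    using \<open>\<delta> > 0\<close> \<open>x < y\<close> by (auto simp: z_def min_def field_simps)
  have pos: "w' t > 0" if "x < t" "t \<le> z" for t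
  proof -
    have "t \<in> S"
      using that z sub by auto
    then show ?thesis
      using inc[rule_format, of "t - x"] that z crit by simp
  qed
  have "{x..z} \<subseteq> S"
    using z sub by auto
  then have "w x < w z"
    using DERIV_within_pos_imp_less[OF der _ z(1) pos] by simp
  with z pos[of z] show thesis
    using that by simp
qed

lemma critical_point_increase_left:
  fixes w w' :: "real \<Rightarrow> real"
  assumes der: "\<And>t. t \<in> S \<Longrightarrow> (w has_real_derivative w' t) (at t within S)"
    and der2: "(w' has_real_derivative c) (at x within S)" "c > 0"
    and crit: "w' x = 0"
    and sub: "{y..x} \<subseteq> S" and "y < x"
  obtains z where "y \<le> z" "z < x" "w x < w z" "w' z < 0"
proof -
  obtain \<delta> where "\<delta> > 0" and inc: "\<forall>h>0. x - h \<in> S \<longrightarrow> h < \<delta> \<longrightarrow> w' (x - h) < w' x"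
    using has_real_derivative_pos_inc_left[OF der2] by blast
  define z where "z = x - min \<delta> (x - y) / 2"
  have z: "y \<le> z" "z < x" "x - z < \<delta>"
    using \<open>\<delta> > 0\<close> \<open>y < x\<close> by (auto simp: z_def min_def field_simps)
  have neg: "w' t < 0" if "z \<le> t" "t < x" for t
  proof -
    have "t \<in> S"
      using that z sub by auto
    then show ?thesis
      using inc[rule_format, of "x - t"] that z crit by simp
  qed
  have "{z..x} \<subseteq> S"
    using z sub by auto
  then have "w z > w x"
    using DERIV_within_neg_imp_greater[OF der _ z(2) neg] by simp
  with z neg[of z] show thesis
    using that by simp
qed

lemma deriv_stays_positive:
  fixes w w' w'' :: "real \<Rightarrow> real"
  assumes der: "\<And>t. t \<in> S \<Longrightarrow> (w has_real_derivative w' t) (at t within S)"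
    and der2: "\<And>t. t \<in> S \<Longrightarrow> (w' has_real_derivative w'' t) (at t within S)"
    and crit: "\<And>t. t \<in> S \<Longrightarrow> w' t = 0 \<Longrightarrow> w t > 0 \<Longrightarrow> w'' t > 0"
    and sub: "{a..b} \<subseteq> S" and "a \<le> b" "w a > 0" "w' a > 0"
  shows "w' b > 0"
proof (rule ccontr)
  assume "\<not> w' b > 0"
  moreover have "continuous_on {a..b} w'"
    using continuous_on_subset[OF DERIV_continuous_on[OF der2] sub] .
  ultimately obtain z where z: "a < z" "z \<le> b" "w' z = 0" and pos: "\<And>t. a \<le> t \<Longrightarrow> t < z \<Longrightarrow> w' t > 0"
    using continuous_on_first_zero[of a b w'] \<open>a \<le> b\<close> \<open>w' a > 0\<close> by auto
  have sub_z: "{a..z} \<subseteq> S"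
    using sub z by auto
  have "w a < w z"
    using DERIV_within_pos_imp_less[OF der sub_z z(1)] pos by simp
  moreover have "z \<in> S"
    using sub_z z(1) by auto
  ultimately have "w'' z > 0"
    using crit[OF _ z(3)] \<open>w a > 0\<close> by simp
  then obtain t where "a \<le> t" "t < z" "w' t < 0"
    using critical_point_increase_left[OF der der2[OF \<open>z \<in> S\<close>] _ z(3) sub_z z(1)] by blast
  then show False
    using pos[of t] by simp
qed

lemma second_order_inequality_unbounded:
  fixes w w' w'' :: "real \<Rightarrow> real"
  assumes der: "\<And>t. t \<in> {a..} \<Longrightarrow> (w has_real_derivative w' t) (at t within {a..})"
    and der2: "\<And>t. t \<in> {a..} \<Longrightarrow> (w' has_real_derivative w'' t) (at t within {a..})"
    and "k \<ge> 0" "c > 0"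
    and ineq: "\<And>t. t \<ge> a \<Longrightarrow> w'' t + k * w' t \<ge> c"
  shows "\<not> bounded (w ` {a..})"
proof
  assume "bounded (w ` {a..})"
  then obtain B where B: "\<And>t. t \<ge> a \<Longrightarrow> \<bar>w t\<bar> \<le> B"
    unfolding bounded_real by auto
  \<comment> \<open>\<open>\<phi>\<close> is nondecreasing, so with \<open>w\<close> bounded \<open>w'\<close> grows linearly.\<close>
  define \<phi> where "\<phi> t = w' t + k * w t - c * t" for t
  have "\<phi> a \<le> \<phi> t" if "t \<ge> a" for t
  proof (rule DERIV_within_nonneg_imp_le[of "{a..}" \<phi> "\<lambda>t. w'' t + k * w' t - c"])
    fix s assume "s \<in> {a..}"
    then show "(\<phi> has_real_derivative w'' s + k * w' s - c) (at s within {a..})"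
      unfolding \<phi>_def by (auto intro!: derivative_eq_intros der der2)
  qed (use that ineq in auto)
  then have w'_lower: "w' t \<ge> \<phi> a - k * B + c * t" if "t \<ge> a" for t
    using that B[OF that] mult_left_mono[of "w t" B k] \<open>k \<ge> 0\<close>
    by (fastforce simp: \<phi>_def abs_le_iff)
  define X where "X = max a ((1 - \<phi> a + k * B) / c)"
  have w'_ge_1: "w' t \<ge> 1" if "t \<ge> X" for t
  proof -
    have "c * t \<ge> 1 - \<phi> a + k * B"
      using that \<open>c > 0\<close> by (simp add: X_def field_simps)
    then show ?thesis
      using w'_lower[of t] that by (simp add: X_def)
  qed
  define Y where "Y = X + 2 * B + 1"
  have "B \<ge> 0"
    using B[of a] by simp
  then have "X \<le> Y"
    by (simp add: Y_def)
  have "w X - X \<le> w Y - Y"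
  proof (rule DERIV_within_nonneg_imp_le[of "{a..}" "\<lambda>t. w t - t" "\<lambda>t. w' t - 1"])
    fix s assume "s \<in> {a..}"
    then show "((\<lambda>t. w t - t) has_real_derivative w' s - 1) (at s within {a..})"
      by (auto intro!: derivative_eq_intros der)
  qed (use \<open>X \<le> Y\<close> w'_ge_1 in \<open>auto simp: X_def\<close>)
  moreover have "\<bar>w X\<bar> \<le> B" "\<bar>w Y\<bar> \<le> B"
    using B \<open>X \<le> Y\<close> by (auto simp: X_def)
  ultimately show False
    by (simp add: Y_def abs_le_iff)
qed

lemma neumann_maximum_principle:
  fixes w w' w'' :: "real \<Rightarrow> real"
  assumes der: "\<And>t. t \<in> {a..b} \<Longrightarrow> (w has_real_derivative w' t) (at t within {a..b})"
    and der2: "\<And>t. t \<in> {a..b} \<Longrightarrow> (w' has_real_derivative w'' t) (at t within {a..b})"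
    and crit: "\<And>t. t \<in> {a..b} \<Longrightarrow> w' t = 0 \<Longrightarrow> w t > 0 \<Longrightarrow> w'' t > 0"
    and "a < b" "w' a = 0" "w b > 0"
  shows "w' b > 0"
proof (rule ccontr)
  assume "\<not> w' b > 0"
  obtain x where x: "x \<in> {a..b}" and max: "\<And>y. y \<in> {a..b} \<Longrightarrow> w y \<le> w x"
    using continuous_attains_sup[of "{a..b}" w] DERIV_continuous_on[OF der] \<open>a < b\<close> by auto
  have "w x > 0"
    using max[of b] \<open>a < b\<close> \<open>w b > 0\<close> by simp
  moreover have "w' x = 0"
    using deriv_zero_at_max_Icc[OF der x max \<open>a < b\<close> \<open>w' a = 0\<close>] \<open>\<not> w' b > 0\<close> by simp
  ultimately have "w'' x > 0"
    using crit x by blast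
  show False
  proof (cases "x < b")
    case True
    then obtain z where "x < z" "z \<le> b" "w x < w z"
      using critical_point_increase_right[OF der der2[OF x] \<open>w'' x > 0\<close> \<open>w' x = 0\<close>, of b] x by auto
    then show False
      using max[of z] x by simp
  next
    case False
    with x have "a < x" "{a..x} \<subseteq> {a..b}"
      using \<open>a < b\<close> by auto
    then obtain z where "a \<le> z" "z < x" "w x < w z"
      using critical_point_increase_left[OF der der2[OF x] \<open>w'' x > 0\<close> \<open>w' x = 0\<close>] by blast
    then show False
      using max[of z] x by simp
  qed
qed

lemma positive_start_imp_eventually_deriv_pos:
  fixes w w' w'' :: "real \<Rightarrow> real"
  assumes der: "\<And>t. t \<in> {a..} \<Longrightarrow> (w has_real_derivative w' t) (at t within {a..})"
    and der2: "\<And>t. t \<in> {a..} \<Longrightarrow> (w' has_real_derivative w'' t) (at t within {a..})"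
    and crit: "\<And>t. t \<in> {a..} \<Longrightarrow> w' t = 0 \<Longrightarrow> w t > 0 \<Longrightarrow> w'' t > 0"
    and "w a > 0" "w' a \<ge> 0"
  obtains x where "x \<ge> a" "w x > 0" "\<And>t. t \<ge> x \<Longrightarrow> w' t > 0"
proof -
  obtain x where x: "x \<ge> a" "w x > 0" "w' x > 0"
  proof (cases "w' a = 0")
    case True
    have "{a..a + 1} \<subseteq> {a..}" "a < a + 1"
      by auto
    then obtain z where "a < z" "w a < w z" "w' z > 0"
      using critical_point_increase_right[OF der der2[of a] crit[OF _ True \<open>w a > 0\<close>] True]
      by (metis atLeast_iff order_refl)
    then show thesis
      using that[of z] \<open>w a > 0\<close> by simp
  next
    case False
    then show thesis
      using that[of a] \<open>w' a \<ge> 0\<close> \<open>w a > 0\<close> by simp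
  qed
  have "w' t > 0" if "t \<ge> x" for t
  proof (rule deriv_stays_positive[OF der der2 crit])
    show "{x..t} \<subseteq> {a..}"
      using x(1) by auto
  qed (use that x in auto)
  with x show thesis
    using that by blast
qed

lemma bounded_imp_deriv_neg_at_left_end:
  fixes w w' w'' :: "real \<Rightarrow> real"
  assumes der: "\<And>t. t \<in> {a..} \<Longrightarrow> (w has_real_derivative w' t) (at t within {a..})"
    and der2: "\<And>t. t \<in> {a..} \<Longrightarrow> (w' has_real_derivative w'' t) (at t within {a..})"
    and "k \<ge> 0" "\<rho> > 0"
    and ineq: "\<And>t. t \<ge> a \<Longrightarrow> w' t \<ge> 0 \<Longrightarrow> w'' t + k * w' t \<ge> \<rho> * w t"
    and bdd: "bounded (w ` {a..})" and "w a > 0"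
  shows "w' a < 0"
proof (rule ccontr)
  assume "\<not> w' a < 0"
  have crit: "w'' t > 0" if "t \<in> {a..}" "w' t = 0" "w t > 0" for t
  proof -
    have "0 < \<rho> * w t"
      using that \<open>\<rho> > 0\<close> by simp
    also have "\<dots> \<le> w'' t"
      using ineq[of t] that by simp
    finally show ?thesis .
  qed
  have "w' a \<ge> 0"
    using \<open>\<not> w' a < 0\<close> by simp
  then obtain x where x: "x \<ge> a" "w x > 0" and pos: "\<And>t. t \<ge> x \<Longrightarrow> w' t > 0"
    using positive_start_imp_eventually_deriv_pos[OF der der2 crit \<open>w a > 0\<close>] by blast
  have sub: "{x..} \<subseteq> {a..}"
    using x(1) by auto
  have ineq_x: "w'' t + k * w' t \<ge> \<rho> * w x" if "t \<ge> x" for t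
  proof -
    have "w x \<le> w t"
      using DERIV_within_nonneg_imp_le[OF der _ that] pos sub by (simp add: less_imp_le)
    then have "\<rho> * w x \<le> \<rho> * w t"
      using \<open>\<rho> > 0\<close> by simp
    also have "\<dots> \<le> w'' t + k * w' t"
      using ineq[of t] pos[OF that] that x(1) by simp
    finally show ?thesis .
  qed
  have "\<not> bounded (w ` {x..})"
  proof (rule second_order_inequality_unbounded[OF _ _ \<open>k \<ge> 0\<close> _ ineq_x])
    show "0 < \<rho> * w x"
      using \<open>\<rho> > 0\<close> x(2) by simp
    show "(w has_real_derivative w' t) (at t within {x..})"
      and "(w' has_real_derivative w'' t) (at t within {x..})" if "t \<in> {x..}" for t
      using DERIV_subset[OF der sub] DERIV_subset[OF der2 sub] that sub by auto
  qed
  moreover have "w ` {x..} \<subseteq> w ` {a..}"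
    using sub by auto
  ultimately show False
    using bounded_subset[OF bdd] by blast
qed

section \<open>Differences of solutions of the HJB equation\<close>

lemma SUP_mult_atLeastAtMost:
  fixes a u0 :: real
  assumes "u0 \<ge> 0"
  shows "(SUP u\<in>{0..u0}. a * u) = max 0 (a * u0)"
proof (rule cSup_eq_maximum)
  show "max 0 (a * u0) \<in> (\<lambda>u. a * u) ` {0..u0}"
    using assms by (cases "a * u0 \<ge> 0") (auto simp: max_def intro: image_eqI[of _ _ u0] image_eqI[of _ _ 0])
  show "y \<le> max 0 (a * u0)" if "y \<in> (\<lambda>u. a * u) ` {0..u0}" for y
    using that mult_left_mono[of _ u0 a] mult_nonpos_nonneg[of a] by (cases "a \<ge> 0") force+
qed

lemma HJB_difference_inequality:
  fixes f1 f2 p1 p2 q1 q2 :: real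
  assumes "sg > 0" "u0 \<ge> 0"
    and eq1: "- r * f1 - mu * p1 + sg^2/2 * q1 + (SUP u\<in>{0..u0}. (beta + p1) * u) = c"
    and eq2: "- r * f2 - mu * p2 + sg^2/2 * q2 + (SUP u\<in>{0..u0}. (beta + p2) * u) = c"
    and "p1 \<le> p2"
  shows "(q2 - q1) + 2 * (\<bar>mu\<bar> + u0) / sg^2 * (p2 - p1) \<ge> 2 * r / sg^2 * (f2 - f1)"
proof -
  have "(beta + p1) * u0 \<le> (beta + p2) * u0"
    using \<open>p1 \<le> p2\<close> \<open>u0 \<ge> 0\<close> by (simp add: mult_right_mono)
  then have hamiltonian: "max 0 ((beta + p2) * u0) - max 0 ((beta + p1) * u0) \<le> u0 * (p2 - p1)"
    by (simp add: max_def algebra_simps)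
  have "0 \<le> (\<bar>mu\<bar> + mu) * (p2 - p1)"
    using \<open>p1 \<le> p2\<close> abs_ge_minus_self[of mu] by (intro mult_nonneg_nonneg) linarith+
  moreover have "sg^2/2 * (q2 - q1) = r * (f2 - f1) + mu * (p2 - p1)
      - (max 0 ((beta + p2) * u0) - max 0 ((beta + p1) * u0))"
    using eq1 eq2 unfolding SUP_mult_atLeastAtMost[OF \<open>u0 \<ge> 0\<close>] right_diff_distrib by linarith
  ultimately have "sg^2/2 * (q2 - q1) \<ge> r * (f2 - f1) - (\<bar>mu\<bar> + u0) * (p2 - p1)"
    using hamiltonian unfolding distrib_right by linarith
  moreover have "sg^2/2 * (2 * r / sg^2 * (f2 - f1)) = r * (f2 - f1)"
    and "sg^2/2 * ((q2 - q1) + 2 * (\<bar>mu\<bar> + u0) / sg^2 * (p2 - p1))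
      = sg^2/2 * (q2 - q1) + (\<bar>mu\<bar> + u0) * (p2 - p1)"
    using \<open>sg > 0\<close> by (simp_all add: distrib_left)
  ultimately have "sg^2/2 * (2 * r / sg^2 * (f2 - f1))
      \<le> sg^2/2 * ((q2 - q1) + 2 * (\<bar>mu\<bar> + u0) / sg^2 * (p2 - p1))"
    by linarith
  moreover have "sg^2/2 > 0"
    using \<open>sg > 0\<close> by simp
  ultimately show ?thesis
    using mult_le_cancel_left_pos by blast
qed

section \<open>The explicit solution pieces\<close>

lemma theta2_pos:
  assumes "sg > 0" "r > 0"
  shows "theta2 mu sg r u > 0"
proof -
  have "\<bar>mu - u\<bar> = sqrt ((mu - u)^2)"
    by simp
  also have "\<dots> < sqrt ((mu - u)^2 + 2 * r * sg^2)"
    using assms by (intro real_sqrt_less_mono) simp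
  finally show ?thesis
    using assms by (simp add: theta2_def)
qed

lemma theta1_add_theta2_pos:
  assumes "sg > 0" "r > 0"
  shows "theta1 mu sg r u + theta2 mu sg r u > 0"
proof -
  have "sqrt ((mu - u)^2 + 2 * r * sg^2) > 0"
    using assms by (intro real_sqrt_gt_zero add_nonneg_pos) simp_all
  then show ?thesis
    using assms by (simp add: theta1_def theta2_def add_divide_distrib[symmetric])
qed

lemma Gf_eq_exp_combination:
  assumes "g1 = theta1 mu sg r 0" "g2 = theta2 mu sg r 0" "E = exp ((g1 + g2) * d)"
    and "A = (C * g2 * exp (- g2 * (s - d)) - beta) / (g1 * exp (g1 * s) + g2 * E * exp (- g2 * s))"
  shows "Gf mu sg r beta d C s =
    (\<lambda>z. A * (exp (g1 * z) - E * exp (- g2 * z)) + C * exp (- g2 * (z - d)))"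
  unfolding Gf_def Let_def assms ..

lemma Hf_eq_exp_combination:
  assumes "g1 = theta1 mu sg r 0" "g2 = theta2 mu sg r 0" "E = g1 / g2 * exp ((g1 + g2) * t)"
    and "A = (C + 1 / r - beta / g2 * exp (- g2 * (d - t))) / (exp (g1 * d) + E * exp (- g2 * d))"
  shows "Hf mu sg r beta d C t =
    (\<lambda>z. - 1 / r + A * (exp (g1 * z) + E * exp (- g2 * z)) + beta / g2 * exp (- g2 * (z - t)))"
  unfolding Hf_def Let_def assms ..

lemma Gf_field_differentiable: "Gf mu sg r beta d C s field_differentiable at z"
proof -
  \<comment> \<open>With the coefficient \<open>A\<close> abstracted, \<open>derivative_eq_intros\<close> does not treat it as a
    quotient needing a nonzero denominator.\<close>
  have "(\<lambda>z. A * (exp (g1 * z) - E * exp (- g2 * z)) + C * exp (- g2 * (z - d))) field_differentiable at z"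
    for A E g1 g2
    unfolding field_differentiable_def by (rule exI) (auto intro!: derivative_eq_intros)
  then show ?thesis
    by (simp only: Gf_eq_exp_combination[OF refl refl refl refl])
qed

lemma Hf_field_differentiable: "Hf mu sg r beta d C t field_differentiable at z"
proof -
  have "(\<lambda>z. - 1 / r + A * (exp (g1 * z) + E * exp (- g2 * z)) + B * exp (- g2 * (z - t)))
          field_differentiable at z" for A B E g1 g2
    unfolding field_differentiable_def by (rule exI) (auto intro!: derivative_eq_intros)
  then show ?thesis
    by (simp only: Hf_eq_exp_combination[OF refl refl refl refl])
qed

lemma deriv_Gf_diagonal:
  assumes "sg > 0" "r > 0"
  shows "deriv (Gf mu sg r beta d C d) d = - beta"
proof -
  define g1 g2 where "g1 = theta1 mu sg r 0" and "g2 = theta2 mu sg r 0"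
  define E where "E = exp ((g1 + g2) * d)"
  define A where "A = (C * g2 * exp (- g2 * (d - d)) - beta) / (g1 * exp (g1 * d) + g2 * E * exp (- g2 * d))"
  have "g1 + g2 > 0"
    using theta1_add_theta2_pos[OF assms] by (simp add: g1_def g2_def)
  have "E * exp (- g2 * d) = exp (g1 * d)"
    by (simp add: E_def mult_exp_exp algebra_simps)
  then have "g1 * exp (g1 * d) + g2 * (E * exp (- g2 * d)) = (g1 + g2) * exp (g1 * d)"
    by (simp add: algebra_simps)
  then have "g1 * exp (g1 * d) + g2 * (E * exp (- g2 * d)) \<noteq> 0"
    using \<open>g1 + g2 > 0\<close> by simp
  then have A: "A * (g1 * exp (g1 * d) + g2 * (E * exp (- g2 * d))) = C * g2 - beta"
    by (simp add: A_def mult.assoc)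
  have "(Gf mu sg r beta d C d has_real_derivative A * (g1 * exp (g1 * d) + g2 * (E * exp (- g2 * d))) - C * g2) (at d)"
    unfolding Gf_eq_exp_combination[OF g1_def g2_def E_def A_def]
    by (auto intro!: derivative_eq_intros simp: algebra_simps)
  also have "A * (g1 * exp (g1 * d) + g2 * (E * exp (- g2 * d))) - C * g2 = - beta"
    using A by simp
  finally show ?thesis
    by (rule DERIV_imp_deriv)
qed

lemma deriv_Hf_diagonal:
  assumes "sg > 0" "r > 0"
  shows "deriv (Hf mu sg r beta d C d) d = - beta"
proof -
  define g1 g2 where "g1 = theta1 mu sg r 0" and "g2 = theta2 mu sg r 0"
  define E where "E = g1 / g2 * exp ((g1 + g2) * d)"
  define A where "A = (C + 1 / r - beta / g2 * exp (- g2 * (d - d))) / (exp (g1 * d) + E * exp (- g2 * d))"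
  have "g2 > 0"
    using theta2_pos[OF assms] by (simp add: g2_def)
  have "g2 * (E * exp (- g2 * d)) = g1 * exp (g1 * d)"
    using \<open>g2 > 0\<close> by (simp add: E_def mult_exp_exp algebra_simps)
  have "(Hf mu sg r beta d C d has_real_derivative A * (g1 * exp (g1 * d) - g2 * (E * exp (- g2 * d))) - beta / g2 * g2) (at d)"
    unfolding Hf_eq_exp_combination[OF g1_def g2_def E_def A_def]
    by (auto intro!: derivative_eq_intros simp: algebra_simps)
  also have "A * (g1 * exp (g1 * d) - g2 * (E * exp (- g2 * d))) - beta / g2 * g2 = - beta"
    using \<open>g2 * (E * exp (- g2 * d)) = g1 * exp (g1 * d)\<close> \<open>g2 > 0\<close> by simp
  finally show ?thesis
    by (rule DERIV_imp_deriv)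
qed

lemma is_zf_imp_HJB_solution:
  assumes "0 < s" "s < d" and zf: "is_zf mu sg u0 r beta d C s"
  obtains f p q where
    "\<And>x. x \<in> {0..d} \<Longrightarrow> (f has_real_derivative p x) (at x within {0..d})"
    "\<And>x. x \<in> {0..d} \<Longrightarrow> (p has_real_derivative q x) (at x within {0..d})"
    "\<And>x. x \<in> {0..d} \<Longrightarrow> - r * f x - mu * p x + sg^2/2 * q x + (SUP u\<in>{0..u0}. (beta + p x) * u) = 0"
    "p 0 = 0" "f d = C" "deriv (Gf mu sg r beta d C s) d = p d"
proof -
  define f where "f z = (if z \<le> s then Ff mu sg u0 r beta s z else Gf mu sg r beta d C s z)" for z
  obtain p q where der: "\<And>x. x \<in> {0..d} \<Longrightarrow> (f has_real_derivative p x) (at x within {0..d})"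
    and der2: "\<And>x. x \<in> {0..d} \<Longrightarrow> (p has_real_derivative q x) (at x within {0..d})"
    and hjb: "\<And>x. x \<in> {0..d} \<Longrightarrow> - r * f x - mu * p x + sg^2/2 * q x + (SUP u\<in>{0..u0}. (beta + p x) * u) = 0"
    and neumann: "(f has_real_derivative 0) (at 0 within {0..d})" and "f d = C"
    using zf unfolding is_zf_def solves_P1_def solves_HJB_def f_def[abs_def] Let_def by blast
  have "d > 0"
    using assms by simp
  have "p 0 = 0"
    using has_field_derivative_unique[OF der neumann] \<open>d > 0\<close> by (simp add: at_within_Icc_at_right)
  moreover have "deriv (Gf mu sg r beta d C s) d = p d"
  proof (rule deriv_eq_if_eq_near_within[OF der Gf_field_differentiable])
    show "at d within {0..d} \<noteq> bot"
      using \<open>d > 0\<close> by (simp add: at_within_Icc_at_left)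
    show "Gf mu sg r beta d C s y = f y" if "y \<in> {0..d}" "dist y d < d - s" for y
      using that by (simp add: f_def dist_real_def)
  qed (use \<open>d > 0\<close> \<open>s < d\<close> in auto)
  ultimately show thesis
    using that der der2 hjb \<open>f d = C\<close> by blast
qed

lemma is_zg_imp_HJB_solution:
  assumes "d < t" and zg: "is_zg mu sg u0 r beta d C t"
  obtains g p q where
    "\<And>x. x \<in> {d..} \<Longrightarrow> (g has_real_derivative p x) (at x within {d..})"
    "\<And>x. x \<in> {d..} \<Longrightarrow> (p has_real_derivative q x) (at x within {d..})"
    "\<And>x. x \<in> {d..} \<Longrightarrow> - r * g x - mu * p x + sg^2/2 * q x + (SUP u\<in>{0..u0}. (beta + p x) * u) = 1"
    "bounded (g ` {d..})" "g d = C" "deriv (Hf mu sg r beta d C t) d = p d"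
proof -
  define g where "g z = (if z \<le> t then Hf mu sg r beta d C t z else Kf mu sg u0 r beta t z)" for z
  obtain p q where der: "\<And>x. x \<in> {d..} \<Longrightarrow> (g has_real_derivative p x) (at x within {d..})"
    and der2: "\<And>x. x \<in> {d..} \<Longrightarrow> (p has_real_derivative q x) (at x within {d..})"
    and hjb: "\<And>x. x \<in> {d..} \<Longrightarrow> - r * g x - mu * p x + sg^2/2 * q x + (SUP u\<in>{0..u0}. (beta + p x) * u) = 1"
    and "bounded (g ` {d..})" "g d = C"
    using zg unfolding is_zg_def solves_P2_def solves_HJB_def g_def[abs_def] Let_def by blast
  moreover have "deriv (Hf mu sg r beta d C t) d = p d"
  proof (rule deriv_eq_if_eq_near_within[OF der Hf_field_differentiable])
    show "at d within {d..} \<noteq> bot"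
      by (simp add: at_within_Ici_at_right)
    show "Hf mu sg r beta d C t y = g y" if "y \<in> {d..}" "dist y d < t - d" for y
      using that by (simp add: g_def dist_real_def)
  qed (use \<open>d < t\<close> in auto)
  ultimately show thesis
    using that by blast
qed

lemma deriv_Gf_strict_mono:
  assumes "sg > 0" "u0 > 0" "r > 0" and "C1 < C2"
    and "0 < s1" "s1 < d" "is_zf mu sg u0 r beta d C1 s1"
    and "0 < s2" "s2 < d" "is_zf mu sg u0 r beta d C2 s2"
  shows "deriv (Gf mu sg r beta d C1 s1) d < deriv (Gf mu sg r beta d C2 s2) d"
proof -
  obtain f1 p1 q1 where der1: "\<And>x. x \<in> {0..d} \<Longrightarrow> (f1 has_real_derivative p1 x) (at x within {0..d})"
    and der1': "\<And>x. x \<in> {0..d} \<Longrightarrow> (p1 has_real_derivative q1 x) (at x within {0..d})"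
    and hjb1: "\<And>x. x \<in> {0..d} \<Longrightarrow> - r * f1 x - mu * p1 x + sg^2/2 * q1 x + (SUP u\<in>{0..u0}. (beta + p1 x) * u) = 0"
    and "p1 0 = 0" "f1 d = C1" "deriv (Gf mu sg r beta d C1 s1) d = p1 d"
    using is_zf_imp_HJB_solution[OF assms(5-7)] by blast
  obtain f2 p2 q2 where der2: "\<And>x. x \<in> {0..d} \<Longrightarrow> (f2 has_real_derivative p2 x) (at x within {0..d})"
    and der2': "\<And>x. x \<in> {0..d} \<Longrightarrow> (p2 has_real_derivative q2 x) (at x within {0..d})"
    and hjb2: "\<And>x. x \<in> {0..d} \<Longrightarrow> - r * f2 x - mu * p2 x + sg^2/2 * q2 x + (SUP u\<in>{0..u0}. (beta + p2 x) * u) = 0"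
    and "p2 0 = 0" "f2 d = C2" "deriv (Gf mu sg r beta d C2 s2) d = p2 d"
    using is_zf_imp_HJB_solution[OF assms(8-10)] by blast
  have "p2 d - p1 d > 0"
  proof (rule neumann_maximum_principle[where w = "\<lambda>x. f2 x - f1 x" and w' = "\<lambda>x. p2 x - p1 x"
        and w'' = "\<lambda>x. q2 x - q1 x"])
    fix x assume x: "x \<in> {0..d}"
    show "((\<lambda>x. f2 x - f1 x) has_real_derivative p2 x - p1 x) (at x within {0..d})"
      using DERIV_diff[OF der2[OF x] der1[OF x]] .
    show "((\<lambda>x. p2 x - p1 x) has_real_derivative q2 x - q1 x) (at x within {0..d})"
      using DERIV_diff[OF der2'[OF x] der1'[OF x]] .
    assume "p2 x - p1 x = 0" "f2 x - f1 x > 0"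
    moreover have "0 < 2 * r / sg^2 * (f2 x - f1 x)"
      using \<open>f2 x - f1 x > 0\<close> \<open>r > 0\<close> \<open>sg > 0\<close> by simp
    ultimately show "q2 x - q1 x > 0"
      using HJB_difference_inequality[OF \<open>sg > 0\<close> _ hjb1[OF x] hjb2[OF x]] \<open>u0 > 0\<close> by simp
  next
    show "0 < d" "p2 0 - p1 0 = 0" "f2 d - f1 d > 0"
      using \<open>0 < s1\<close> \<open>s1 < d\<close> \<open>p1 0 = 0\<close> \<open>p2 0 = 0\<close> \<open>f1 d = C1\<close> \<open>f2 d = C2\<close> \<open>C1 < C2\<close> by simp_all
  qed
  then show ?thesis
    using \<open>deriv (Gf mu sg r beta d C1 s1) d = p1 d\<close> \<open>deriv (Gf mu sg r beta d C2 s2) d = p2 d\<close> by simp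
qed

lemma deriv_Hf_strict_antimono:
  assumes "sg > 0" "u0 > 0" "r > 0" and "C1 < C2"
    and "d < t1" "is_zg mu sg u0 r beta d C1 t1"
    and "d < t2" "is_zg mu sg u0 r beta d C2 t2"
  shows "deriv (Hf mu sg r beta d C2 t2) d < deriv (Hf mu sg r beta d C1 t1) d"
proof -
  obtain g1 p1 q1 where der1: "\<And>x. x \<in> {d..} \<Longrightarrow> (g1 has_real_derivative p1 x) (at x within {d..})"
    and der1': "\<And>x. x \<in> {d..} \<Longrightarrow> (p1 has_real_derivative q1 x) (at x within {d..})"
    and hjb1: "\<And>x. x \<in> {d..} \<Longrightarrow> - r * g1 x - mu * p1 x + sg^2/2 * q1 x + (SUP u\<in>{0..u0}. (beta + p1 x) * u) = 1"
    and "bounded (g1 ` {d..})" "g1 d = C1" "deriv (Hf mu sg r beta d C1 t1) d = p1 d"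
    using is_zg_imp_HJB_solution[OF assms(5,6)] by blast
  obtain g2 p2 q2 where der2: "\<And>x. x \<in> {d..} \<Longrightarrow> (g2 has_real_derivative p2 x) (at x within {d..})"
    and der2': "\<And>x. x \<in> {d..} \<Longrightarrow> (p2 has_real_derivative q2 x) (at x within {d..})"
    and hjb2: "\<And>x. x \<in> {d..} \<Longrightarrow> - r * g2 x - mu * p2 x + sg^2/2 * q2 x + (SUP u\<in>{0..u0}. (beta + p2 x) * u) = 1"
    and "bounded (g2 ` {d..})" "g2 d = C2" "deriv (Hf mu sg r beta d C2 t2) d = p2 d"
    using is_zg_imp_HJB_solution[OF assms(7,8)] by blast
  have "p2 d - p1 d < 0"
  proof (rule bounded_imp_deriv_neg_at_left_end[where w = "\<lambda>x. g2 x - g1 x" and w' = "\<lambda>x. p2 x - p1 x"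
        and w'' = "\<lambda>x. q2 x - q1 x" and k = "2 * (\<bar>mu\<bar> + u0) / sg^2" and \<rho> = "2 * r / sg^2"])
    fix x assume x: "x \<in> {d..}"
    show "((\<lambda>x. g2 x - g1 x) has_real_derivative p2 x - p1 x) (at x within {d..})"
      using DERIV_diff[OF der2[OF x] der1[OF x]] .
    show "((\<lambda>x. p2 x - p1 x) has_real_derivative q2 x - q1 x) (at x within {d..})"
      using DERIV_diff[OF der2'[OF x] der1'[OF x]] .
  next
    fix x assume "d \<le> x" "p2 x - p1 x \<ge> 0"
    then show "q2 x - q1 x + 2 * (\<bar>mu\<bar> + u0) / sg^2 * (p2 x - p1 x) \<ge> 2 * r / sg^2 * (g2 x - g1 x)"
      using HJB_difference_inequality[OF \<open>sg > 0\<close> _ hjb1 hjb2] \<open>u0 > 0\<close> by simp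
  next
    show "bounded ((\<lambda>x. g2 x - g1 x) ` {d..})"
      using bounded_minus_comp \<open>bounded (g1 ` {d..})\<close> \<open>bounded (g2 ` {d..})\<close> by blast
    show "0 \<le> 2 * (\<bar>mu\<bar> + u0) / sg^2" "0 < 2 * r / sg^2" "g2 d - g1 d > 0"
      using \<open>u0 > 0\<close> \<open>r > 0\<close> \<open>sg > 0\<close> \<open>g1 d = C1\<close> \<open>g2 d = C2\<close> \<open>C1 < C2\<close> by simp_all
  qed
  then show ?thesis
    using \<open>deriv (Hf mu sg r beta d C1 t1) d = p1 d\<close> \<open>deriv (Hf mu sg r beta d C2 t2) d = p2 d\<close> by simp
qed

theorem lemma4p7:
  fixes mu sg u0 r beta d :: real
  assumes "sg > 0" and "u0 > 0" and "r > 0" and "d > 0"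
    and "0 < beta" and "beta < zeta mu sg u0 r d"
  shows
    "(\<forall>C1 C2 s1 s2.
        xi2 mu sg u0 r beta < C1 \<and> C1 < C2 \<and> C2 < xi1 mu sg u0 r d beta
        \<and> s1 \<in> {0<..<d} \<and> s2 \<in> {0<..<d}
        \<and> is_zf mu sg u0 r beta d C1 s1 \<and> is_zf mu sg u0 r beta d C2 s2
        \<longrightarrow> deriv (Gf mu sg r beta d C1 s1) d < deriv (Gf mu sg r beta d C2 s2) d)
     \<and> deriv (Gf mu sg r beta d (xi1 mu sg u0 r d beta) d) d = - beta
     \<and> (\<forall>C1 C2 t1 t2.
        xi2 mu sg u0 r beta < C1 \<and> C1 < C2 \<and> C2 < xi1 mu sg u0 r d beta
        \<and> t1 \<in> {d<..} \<and> t2 \<in> {d<..}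
        \<and> is_zg mu sg u0 r beta d C1 t1 \<and> is_zg mu sg u0 r beta d C2 t2
        \<longrightarrow> deriv (Hf mu sg r beta d C2 t2) d < deriv (Hf mu sg r beta d C1 t1) d)
     \<and> deriv (Hf mu sg r beta d (xi2 mu sg u0 r beta) d) d = - beta"
proof (intro conjI allI impI)
  fix C1 C2 s1 s2
  assume "xi2 mu sg u0 r beta < C1 \<and> C1 < C2 \<and> C2 < xi1 mu sg u0 r d beta
    \<and> s1 \<in> {0<..<d} \<and> s2 \<in> {0<..<d} \<and> is_zf mu sg u0 r beta d C1 s1 \<and> is_zf mu sg u0 r beta d C2 s2"
  then show "deriv (Gf mu sg r beta d C1 s1) d < deriv (Gf mu sg r beta d C2 s2) d"
    using deriv_Gf_strict_mono[OF \<open>sg > 0\<close> \<open>u0 > 0\<close> \<open>r > 0\<close>] by auto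
next
  fix C1 C2 t1 t2
  assume "xi2 mu sg u0 r beta < C1 \<and> C1 < C2 \<and> C2 < xi1 mu sg u0 r d beta
    \<and> t1 \<in> {d<..} \<and> t2 \<in> {d<..} \<and> is_zg mu sg u0 r beta d C1 t1 \<and> is_zg mu sg u0 r beta d C2 t2"
  then show "deriv (Hf mu sg r beta d C2 t2) d < deriv (Hf mu sg r beta d C1 t1) d"
    using deriv_Hf_strict_antimono[OF \<open>sg > 0\<close> \<open>u0 > 0\<close> \<open>r > 0\<close>] by auto
qed (use deriv_Gf_diagonal deriv_Hf_diagonal \<open>sg > 0\<close> \<open>r > 0\<close> in auto)

end
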